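(* Let $q\geq4$ be an integer, $n=q^2-1$, and let $A_0=I,A_1,A_2,A_3$ be the adjacency matrices of a symmetric 3-class association scheme on $n$ points with first eigenmatrix \[ P=\begin{bmatrix}1&\frac{q^2}{2}-q&\frac{q^2}{2}&q-2\\ 1&\frac q2&-\frac q2&-1\\ 1&-\frac q2+1&-\frac q2&q-2\\ 1&-\frac q2&\frac q2&-1\end{bmatrix}. \] Let $w_1,w_2,w_3$ be nonzero complex numbers satisfying one of the conditions (i)--(vi) below, so that $W=A_0+w_1A_1+w_2A_2+w_3A_3$ is a type-II matrix. Then $W$ is a complex Hadamard matrix if and only if $(w_1,w_2,w_3)$ satisfies (iii), (iv) or (v), or satisfies (vi) with $r=\sqrt{(17q-1)(q-1)}>0$. The conditions are: (i) $w_1=w_2=w_3$ and $w_3+\frac1{w_3}+q^2-3=0$; (ii) $w_3+\frac1{w_3}+q^2-3=0$ and $w_1=w_2=\frac{-(q-3)w_3+(q-1)}{q^2-2q-1}$; (iii) $w_1+\frac1{w_1}=\frac{2(q^2-6)}{q^2-4}$, $w_2=-1$, $w_3=w_1$; (iv) $w_1=w_3=1$ and $w_2+\frac1{w_2}=\frac{-2(q^2-2)}{q^2}$; (v) $w_1+\frac1{w_1}=-\frac2q$, $w_2=\frac1{w_1}$, $w_3=1$; (vi) for a real number $r$ with $r^2=(17q-1)(q-1)$, with $a_{0,1}=\frac{-(q-1)(q-2)+(q+2)r}{2q(q+1)}$, $a_{0,2}=\frac{(q+2)(q-1)-(q-2)r}{2q(q-3)}$, $a_{0,3}=\frac{5q^2-2q-19-(q-1)r}{2(q+1)(q-3)}$,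 $a_{1,2}=\frac{2(-q^4+2q^3+4q^2-10q+1+(q-1)r)}{q^2(q+1)(q-3)}$, $a_{1,3}=-a_{0,2}$: $w_1+\frac1{w_1}=a_{0,1}$ and $w_i=\frac{w_1^2-1}{a_{1,i}w_1-a_{0,i}}$ for $i=2,3$.
   Context: A symmetric association scheme with adjacency matrices $A_0=I,A_1,\dots,A_d$: symmetric $(0,1)$-matrices summing to $J$ whose span is closed under multiplication; with primitive idempotents $E_0=\frac1nJ,\dots,E_d$ the first eigenmatrix is defined by $A_j=\sum_iP_{i,j}E_i$. A type-II matrix is an $n\times n$ matrix $W$ with nonzero complex entries such that $W(W^{(-)})^\top=nI$ ($W^{(-)}$ the entrywise inverse). A complex Hadamard matrix is an $n\times n$ complex matrix $H$ whose entries have absolute value $1$ and $HH^*=nI$. *)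

theory Defs
  imports "HOL-Analysis.Analysis"
begin

definition scale_cmat :: "complex \<Rightarrow> complex^'a^'a \<Rightarrow> complex^'a^'a" where
  "scale_cmat c M = (\<chi> x y. c * M $ x $ y)"

definition all_ones :: "complex^'a^'a" where
  "all_ones = (\<chi> x y. 1)"

definition cmat_span :: "nat \<Rightarrow> (nat \<Rightarrow> complex^'a^'a) \<Rightarrow> (complex^'a^'a) set" where
  "cmat_span d A = {M. \<exists>c :: nat \<Rightarrow> complex. M = (\<Sum>k\<le>d. scale_cmat (c k) (A k))}"

definition sym_assoc_scheme :: "nat \<Rightarrow> (nat \<Rightarrow> complex^'a::finite^'a) \<Rightarrow> bool" where
  "sym_assoc_scheme d A \<longleftrightarrow>
     A 0 = mat 1 \<and>
     (\<forall>i\<le>d. \<forall>x y. A i $ x $ y \<in> {0, 1}) \<and>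
     (\<forall>i\<le>d. A i \<noteq> 0) \<and>
     (\<forall>i\<le>d. transpose (A i) = A i) \<and>
     (\<Sum>i\<le>d. A i) = all_ones \<and>
     (\<forall>i\<le>d. \<forall>j\<le>d. A i ** A j \<in> cmat_span d A)"

text \<open>P is a first eigenmatrix: there are primitive idempotents E 0 = J/n, E 1, ..., E d of the
  Bose-Mesner algebra (nonzero, pairwise orthogonal idempotents in the algebra summing to I)
  with A j = sum_i P i j E i.\<close>
definition first_eigenmatrix :: "nat \<Rightarrow> (nat \<Rightarrow> complex^'a::finite^'a) \<Rightarrow> (nat \<Rightarrow> nat \<Rightarrow> complex) \<Rightarrow> bool" where
  "first_eigenmatrix d A P \<longleftrightarrow>
     (\<exists>E :: nat \<Rightarrow> complex^'a^'a.
        E 0 = scale_cmat (1 / of_nat CARD('a)) all_ones \<and>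
        (\<forall>i\<le>d. E i \<noteq> 0) \<and>
        (\<forall>i\<le>d. \<forall>j\<le>d. E i ** E j = (if i = j then E i else 0)) \<and>
        (\<Sum>i\<le>d. E i) = mat 1 \<and>
        (\<forall>i\<le>d. E i \<in> cmat_span d A) \<and>
        (\<forall>j\<le>d. A j = (\<Sum>i\<le>d. scale_cmat (P i j) (E i))))"

definition entrywise_inverse :: "complex^'a^'a \<Rightarrow> complex^'a^'a" where
  "entrywise_inverse W = (\<chi> x y. inverse (W $ x $ y))"

definition type_II :: "complex^'a::finite^'a \<Rightarrow> bool" where
  "type_II W \<longleftrightarrow> (\<forall>x y. W $ x $ y \<noteq> 0) \<and>
     W ** transpose (entrywise_inverse W) = scale_cmat (of_nat CARD('a)) (mat 1)"

definition conj_transpose :: "complex^'a^'a \<Rightarrow> complex^'a^'a" where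
  "conj_transpose H = (\<chi> x y. cnj (H $ y $ x))"

definition complex_hadamard :: "complex^'a::finite^'a \<Rightarrow> bool" where
  "complex_hadamard H \<longleftrightarrow> (\<forall>x y. cmod (H $ x $ y) = 1) \<and>
     H ** conj_transpose H = scale_cmat (of_nat CARD('a)) (mat 1)"

definition P_q :: "nat \<Rightarrow> nat \<Rightarrow> nat \<Rightarrow> complex" where
  "P_q q i j = (let Q = (of_nat q :: complex) in
     [[1, Q^2/2 - Q, Q^2/2, Q - 2],
      [1, Q/2, -Q/2, -1],
      [1, -Q/2 + 1, -Q/2, Q - 2],
      [1, -Q/2, Q/2, -1]] ! i ! j)"

definition cond_i :: "nat \<Rightarrow> complex \<Rightarrow> complex \<Rightarrow> complex \<Rightarrow> bool" where
  "cond_i q w1 w2 w3 \<longleftrightarrow> (let Q = (of_nat q :: complex) in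
     w1 = w2 \<and> w2 = w3 \<and> w3 + 1/w3 + Q^2 - 3 = 0)"

definition cond_ii :: "nat \<Rightarrow> complex \<Rightarrow> complex \<Rightarrow> complex \<Rightarrow> bool" where
  "cond_ii q w1 w2 w3 \<longleftrightarrow> (let Q = (of_nat q :: complex) in
     w3 + 1/w3 + Q^2 - 3 = 0 \<and> w1 = w2 \<and>
     w2 = (-(Q - 3) * w3 + (Q - 1)) / (Q^2 - 2*Q - 1))"

definition cond_iii :: "nat \<Rightarrow> complex \<Rightarrow> complex \<Rightarrow> complex \<Rightarrow> bool" where
  "cond_iii q w1 w2 w3 \<longleftrightarrow> (let Q = (of_nat q :: complex) in
     w1 + 1/w1 = 2*(Q^2 - 6)/(Q^2 - 4) \<and> w2 = -1 \<and> w3 = w1)"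

definition cond_iv :: "nat \<Rightarrow> complex \<Rightarrow> complex \<Rightarrow> complex \<Rightarrow> bool" where
  "cond_iv q w1 w2 w3 \<longleftrightarrow> (let Q = (of_nat q :: complex) in
     w1 = 1 \<and> w3 = 1 \<and> w2 + 1/w2 = -2*(Q^2 - 2)/Q^2)"

definition cond_v :: "nat \<Rightarrow> complex \<Rightarrow> complex \<Rightarrow> complex \<Rightarrow> bool" where
  "cond_v q w1 w2 w3 \<longleftrightarrow> (let Q = (of_nat q :: complex) in
     w1 + 1/w1 = -2/Q \<and> w2 = 1/w1 \<and> w3 = 1)"

text \<open>Condition (vi) for a given real r (r^2 = (17q-1)(q-1) required separately).\<close>
definition cond_vi :: "nat \<Rightarrow> real \<Rightarrow> complex \<Rightarrow> complex \<Rightarrow> complex \<Rightarrow> bool" where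
  "cond_vi q r w1 w2 w3 \<longleftrightarrow> (let Q = (of_nat q :: complex); R = complex_of_real r;
     a01 = (-(Q - 1)*(Q - 2) + (Q + 2)*R) / (2*Q*(Q + 1));
     a02 = ((Q + 2)*(Q - 1) - (Q - 2)*R) / (2*Q*(Q - 3));
     a03 = (5*Q^2 - 2*Q - 19 - (Q - 1)*R) / (2*(Q + 1)*(Q - 3));
     a12 = 2*(-(Q^4) + 2*Q^3 + 4*Q^2 - 10*Q + 1 + (Q - 1)*R) / (Q^2*(Q + 1)*(Q - 3));
     a13 = -a02 in
     w1 + 1/w1 = a01 \<and>
     w2 = (w1^2 - 1) / (a12*w1 - a02) \<and>
     w3 = (w1^2 - 1) / (a13*w1 - a03))"

end

theory Submission
  imports Defs
begin

text \<open>
  Write W = sum_j w_j A_j with w_0 = 1 and expand A_j = sum_i P_ij E_i in the primitive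
  idempotents. Since the A_j are real and symmetric, W W^* = sum_i lambda_i mu_i E_i with
  lambda_i = sum_j P_ij w_j and mu_i = sum_j P_ij cnj(w_j); the entries of W are the w_j.
  Hence W is complex Hadamard as soon as all w_j are unimodular and lambda_i mu_i = n for
  every i, and unimodularity is necessary. For unimodular weights lambda_i mu_i is linear in
  the numbers a_jk = w_j/w_k + w_k/w_j, and in cases (iii)-(vi) the a_jk make all four rows
  equal to n = q^2 - 1.

  Unimodularity is decided by the real number w + 1/w: it has absolute value at most 2 when
  |w| = 1, and a real value of absolute value less than 2 forces |w| = 1. This rules out
  (i) and (ii), where w_3 + 1/w_3 = 3 - q^2, and (vi) with r < 0, where |a_01| > 2. In (vi)
  with r > 0, conjugating w_2 = (w_1^2 - 1)/(a_12 w_1 - a_02), whose coefficients are real,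
  turns cnj w_1 = 1/w_1 into cnj w_2 = 1/w_2, and likewise for w_3.
\<close>

lemma scale_cmat_index [simp]: "scale_cmat c M $ x $ y = c * M $ x $ y"
  by (simp add: scale_cmat_def)

lemma scale_cmat_1 [simp]: "scale_cmat 1 M = M"
  by (simp add: vec_eq_iff)

lemma scale_cmat_0 [simp]: "scale_cmat c 0 = 0"
  by (simp add: vec_eq_iff)

lemma scale_cmat_sum: "(\<Sum>i\<in>I. scale_cmat c (M i)) = scale_cmat c (\<Sum>i\<in>I. M i)"
  by (simp add: vec_eq_iff sum_distrib_left)

lemma scale_cmat_mult:
  "scale_cmat a (M :: complex^'a::finite^'a) ** scale_cmat b N = scale_cmat (a * b) (M ** N)"
  by (simp add: vec_eq_iff matrix_matrix_mult_def sum_distrib_left mult_ac)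

lemma sum_matrix_mult:
  "(\<Sum>i\<in>I. M i) ** (N :: complex^'a::finite^'a) = (\<Sum>i\<in>I. M i ** N)"
  by (simp add: vec_eq_iff matrix_matrix_mult_def sum_distrib_right sum.swap[of _ I])

lemma matrix_mult_sum:
  "(M :: complex^'a::finite^'a) ** (\<Sum>i\<in>I. N i) = (\<Sum>i\<in>I. M ** N i)"
  by (simp add: vec_eq_iff matrix_matrix_mult_def sum_distrib_left sum.swap[of _ I])

lemma orthogonal_idempotents_combination_mult:
  fixes E :: "nat \<Rightarrow> complex^'a::finite^'a"
  assumes "\<forall>i\<le>d. \<forall>j\<le>d. E i ** E j = (if i = j then E i else 0)"
  shows "(\<Sum>i\<le>d. scale_cmat (c i) (E i)) ** (\<Sum>j\<le>d. scale_cmat (e j) (E j))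
    = (\<Sum>i\<le>d. scale_cmat (c i * e i) (E i))"
proof -
  have "scale_cmat (c i) (E i) ** (\<Sum>j\<le>d. scale_cmat (e j) (E j)) = scale_cmat (c i * e i) (E i)"
    if "i \<le> d" for i
  proof -
    have "scale_cmat (c i) (E i) ** (\<Sum>j\<le>d. scale_cmat (e j) (E j))
        = (\<Sum>j\<le>d. if i = j then scale_cmat (c i * e j) (E i) else 0)"
      unfolding matrix_mult_sum scale_cmat_mult using assms that
      by (intro sum.cong) auto
    also have "\<dots> = scale_cmat (c i * e i) (E i)"
      using that by (simp add: sum.delta)
    finally show ?thesis .
  qed
  then show ?thesis
    unfolding sum_matrix_mult by (intro sum.cong) auto
qed

lemma sym_assoc_scheme_entry:
  assumes "sym_assoc_scheme d A"
  obtains j where "j \<le> d" "A j $ x $ y = 1" "\<And>k. k \<le> d \<Longrightarrow> k \<noteq> j \<Longrightarrow> A k $ x $ y = 0"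
proof -
  define S where "S = {k \<in> {..d}. A k $ x $ y = 1}"
  have zero_one: "A k $ x $ y \<in> {0, 1}" if "k \<le> d" for k
    using assms that unfolding sym_assoc_scheme_def by blast
  have "(\<Sum>k\<le>d. A k) $ x $ y = 1"
    using assms by (simp add: sym_assoc_scheme_def all_ones_def)
  moreover have "(\<Sum>k\<le>d. A k) $ x $ y = (\<Sum>k\<le>d. if A k $ x $ y = 1 then 1 else 0)"
    unfolding sum_component using zero_one by (intro sum.cong) auto
  moreover have "\<dots> = (\<Sum>k\<in>S. 1)"
    unfolding S_def by (simp add: sum.If_cases Int_def atMost_def conj_commute)
  ultimately have "card S = 1"
    by simp
  then obtain j where S: "S = {j}"
    using card_1_singletonE by blast
  show thesis
  proof
    show "j \<le> d" "A j $ x $ y = 1"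
      using S unfolding S_def by auto
    show "A k $ x $ y = 0" if "k \<le> d" "k \<noteq> j" for k
      using zero_one[OF that(1)] S that unfolding S_def by auto
  qed
qed

lemma combination_index:
  assumes "sym_assoc_scheme d A" "j \<le> d" "A j $ x $ y = 1"
  shows "(\<Sum>k\<le>d. scale_cmat (w k) (A k)) $ x $ y = w j"
proof -
  obtain j' where "j' \<le> d" "A j' $ x $ y = 1" and others: "\<And>k. k \<le> d \<Longrightarrow> k \<noteq> j' \<Longrightarrow> A k $ x $ y = 0"
    using sym_assoc_scheme_entry[OF assms(1)] by blast
  then have "j' = j"
    using assms(2,3) by fastforce
  then have "(\<Sum>k\<le>d. scale_cmat (w k) (A k)) $ x $ y = (\<Sum>k\<le>d. if k = j then w k else 0)"
    unfolding sum_component using others assms(3) by (intro sum.cong) auto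
  then show ?thesis
    using assms(2) by simp
qed

lemma hadamard_imp_norm_weight:
  assumes "sym_assoc_scheme d A" "complex_hadamard (\<Sum>k\<le>d. scale_cmat (w k) (A k))" "j \<le> d"
  shows "cmod (w j) = 1"
proof -
  have "A j \<noteq> 0" "\<forall>x y. A j $ x $ y \<in> {0, 1}"
    using assms(1,3) unfolding sym_assoc_scheme_def by blast+
  then obtain x y where "A j $ x $ y = 1"
    by (metis vec_eq_iff zero_index insertE singletonD)
  then have "(\<Sum>k\<le>d. scale_cmat (w k) (A k)) $ x $ y = w j"
    by (rule combination_index[OF assms(1,3)])
  then show ?thesis
    using assms(2) unfolding complex_hadamard_def by metis
qed

lemma conj_transpose_combination:
  assumes "sym_assoc_scheme d A"
  shows "conj_transpose (\<Sum>k\<le>d. scale_cmat (w k) (A k)) = (\<Sum>k\<le>d. scale_cmat (cnj (w k)) (A k))"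
proof -
  have "cnj (A k $ y $ x) = A k $ x $ y" if "k \<le> d" for k x y
  proof -
    have "transpose (A k) = A k" "A k $ x $ y \<in> {0, 1}"
      using assms that unfolding sym_assoc_scheme_def by blast+
    moreover have "A k $ y $ x = A k $ x $ y"
      using arg_cong[OF \<open>transpose (A k) = A k\<close>, of "\<lambda>M. M $ x $ y"] by (simp add: transpose_def)
    ultimately show ?thesis
      by auto
  qed
  then show ?thesis
    unfolding conj_transpose_def by (simp add: vec_eq_iff)
qed

lemma combination_in_eigenbasis:
  assumes "\<forall>j\<le>d. A j = (\<Sum>i\<le>d. scale_cmat (P i j) (E i))"
  shows "(\<Sum>j\<le>d. scale_cmat (w j) (A j)) = (\<Sum>i\<le>d. scale_cmat (\<Sum>j\<le>d. P i j * w j) (E i))"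
proof -
  have swap: "(\<Sum>j\<le>d. w j * (\<Sum>i\<le>d. P i j * E i $ x $ y))
      = (\<Sum>i\<le>d. (\<Sum>j\<le>d. P i j * w j) * E i $ x $ y)" for x y
    unfolding sum_distrib_left sum_distrib_right by (subst sum.swap) (simp add: mult_ac)
  have "(\<Sum>j\<le>d. scale_cmat (w j) (A j)) = (\<Sum>j\<le>d. scale_cmat (w j) (\<Sum>i\<le>d. scale_cmat (P i j) (E i)))"
    using assms by (intro sum.cong) auto
  also have "\<dots> = (\<Sum>i\<le>d. scale_cmat (\<Sum>j\<le>d. P i j * w j) (E i))"
    by (simp add: vec_eq_iff swap)
  finally show ?thesis .
qed

lemma hadamard_if_norm_eigenvalues:
  fixes A :: "nat \<Rightarrow> complex^'a::finite^'a"
  assumes sch: "sym_assoc_scheme d A" and eig: "first_eigenmatrix d A P"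
    and norm: "\<And>j. j \<le> d \<Longrightarrow> cmod (w j) = 1"
    and eigenvalues: "\<And>i. i \<le> d \<Longrightarrow>
      (\<Sum>j\<le>d. P i j * w j) * (\<Sum>j\<le>d. P i j * cnj (w j)) = of_nat CARD('a)"
  shows "complex_hadamard (\<Sum>j\<le>d. scale_cmat (w j) (A j))"
proof -
  from eig obtain E :: "nat \<Rightarrow> complex^'a^'a" where
    orth: "\<forall>i\<le>d. \<forall>j\<le>d. E i ** E j = (if i = j then E i else 0)" and
    sum_E: "(\<Sum>i\<le>d. E i) = mat 1" and
    A: "\<forall>j\<le>d. A j = (\<Sum>i\<le>d. scale_cmat (P i j) (E i))"
    unfolding first_eigenmatrix_def by blast
  have entries: "cmod ((\<Sum>j\<le>d. scale_cmat (w j) (A j)) $ x $ y) = 1" for x y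
    using sym_assoc_scheme_entry[OF sch] combination_index[OF sch] norm by metis
  have "(\<Sum>j\<le>d. scale_cmat (w j) (A j)) ** conj_transpose (\<Sum>j\<le>d. scale_cmat (w j) (A j))
      = (\<Sum>i\<le>d. scale_cmat ((\<Sum>j\<le>d. P i j * w j) * (\<Sum>j\<le>d. P i j * cnj (w j))) (E i))"
    unfolding conj_transpose_combination[OF sch] unfolding combination_in_eigenbasis[OF A]
    by (rule orthogonal_idempotents_combination_mult[OF orth])
  also have "\<dots> = scale_cmat (of_nat CARD('a)) (mat 1)"
    using eigenvalues by (simp add: scale_cmat_sum sum_E)
  finally show ?thesis
    unfolding complex_hadamard_def using entries by blast
qed

lemma quadratic_if_add_inverse:
  fixes w :: "'a::field"
  assumes "w \<noteq> 0" "w + 1 / w = a"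
  shows "w^2 - a * w + 1 = 0"
proof -
  have "w * (w + 1 / w) = w^2 + 1"
    using assms(1) by (simp add: field_simps power2_eq_square)
  then show ?thesis
    using assms(2) by (simp add: algebra_simps)
qed

lemma abs_le_2_if_norm_1_add_inverse:
  assumes "cmod w = 1" "w + 1 / w = of_real t"
  shows "\<bar>t\<bar> \<le> 2"
proof -
  have "w + 1 / w = of_real (2 * Re w)"
    using assms(1) by (simp add: divide_conv_cnj complex_add_cnj)
  then have "t = 2 * Re w"
    using assms(2) of_real_eq_iff by metis
  then show ?thesis
    using abs_Re_le_cmod[of w] assms(1) by simp
qed

lemma norm_1_if_add_inverse_real:
  assumes "w \<noteq> 0" "w + 1 / w = of_real t" "\<bar>t\<bar> < 2"
  shows "cmod w = 1"
proof -
  have "w * w - of_real t * w + 1 = 0"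
    using quadratic_if_add_inverse[OF assms(1,2)] by (simp add: power2_eq_square)
  then have re: "(Re w)^2 - (Im w)^2 - t * Re w + 1 = 0" and im: "(2 * Re w - t) * Im w = 0"
    by (simp_all add: complex_eq_iff power2_eq_square algebra_simps)
  have "Im w \<noteq> 0"
  proof
    assume "Im w = 0"
    with re have "(2 * Re w - t)^2 = t^2 - 4"
      by (simp add: power2_eq_square algebra_simps)
    moreover have "t^2 < 4"
      using power_strict_mono[OF assms(3) abs_ge_zero, of 2] by simp
    ultimately show False
      by (metis diff_less_0_iff_less not_less zero_le_power2)
  qed
  with im have "t = 2 * Re w"
    by simp
  with re have "(Re w)^2 + (Im w)^2 = 1"
    by (simp add: power2_eq_square algebra_simps)
  then show ?thesis
    by (simp add: cmod_def)
qed

lemma ratio_add_inverse_eq_iff: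
  fixes x y c :: "'a::field"
  assumes "x \<noteq> 0" "y \<noteq> 0"
  shows "x / y + y / x = c \<longleftrightarrow> x^2 + y^2 = c * x * y"
  using assms by (auto simp add: field_simps power2_eq_square)

text \<open>The two conclusions are the quadratics z^2 - b z + 1 = 0 and z^2 - c w z + w^2 = 0.
  Their difference is linear in z and gives the formula for z; the hypothesis on a, b, c
  makes them compatible.\<close>

lemma quotient_pair_sums:
  fixes w a b c z :: "'a::field"
  assumes "w \<noteq> 0" "w + 1 / w = a" "a^2 - a * b * c + b^2 + c^2 = 4"
    and z: "z = (w^2 - 1) / (c * w - b)" and "z \<noteq> 0"
  shows "z + 1 / z = b" "w / z + z / w = c"
proof -
  have nz: "w^2 - 1 \<noteq> 0" "c * w - b \<noteq> 0"
    using z \<open>z \<noteq> 0\<close> by auto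
  have quartic: "(w^2 - 1)^2 + w * (c - b * w) * (c * w - b) = 0"
    using quadratic_if_add_inverse[OF assms(1,2)] assms(3) by algebra
  have "(w^2 - 1) / (c * w - b) + (c * w - b) / (w^2 - 1) = b"
    using nz by (subst ratio_add_inverse_eq_iff) (use quartic in algebra)+
  then show "z + 1 / z = b"
    by (simp add: z)
  have "w * (c * w - b) / (w^2 - 1) + (w^2 - 1) / (w * (c * w - b)) = c"
    using nz assms(1) by (subst ratio_add_inverse_eq_iff) (use quartic in algebra)+
  then show "w / z + z / w = c"
    by (simp add: z mult.commute)
qed

lemma norm_1_if_cnj_eq_inverse:
  assumes "z \<noteq> 0" "cnj z = 1 / z"
  shows "cmod z = 1"
proof -
  have "z * cnj z = 1"
    using assms by simp
  then have "complex_of_real ((cmod z)^2) = 1"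
    by (simp only: complex_norm_square)
  then have "(cmod z)^2 = 1"
    by (metis of_real_eq_1_iff)
  then show ?thesis
    using norm_ge_zero[of z] by (auto simp: power2_eq_1_iff)
qed

lemma norm_quotient_eq_1:
  fixes w b c z :: complex
  assumes "cmod w = 1" "cnj b = b" "cnj c = c"
    and z: "z = (w^2 - 1) / (c * w - b)" "z \<noteq> 0" "z + 1 / z = b"
  shows "cmod z = 1"
proof (rule norm_1_if_cnj_eq_inverse[OF z(2)])
  have w: "w \<noteq> 0" "cnj w = 1 / w"
    using assms(1) divide_conv_cnj[of w 1] by auto
  have nz: "w^2 - 1 \<noteq> 0" "c * w - b \<noteq> 0"
    using z(1,2) by auto
  have "(w^2 - 1) / (c * w - b) + (c * w - b) / (w^2 - 1) = b"
    using z by simp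
  then have "(w^2 - 1)^2 + (c * w - b)^2 = b * (w^2 - 1) * (c * w - b)"
    using nz by (simp add: ratio_add_inverse_eq_iff)
  then have quartic: "(w^2 - 1)^2 + w * (c - b * w) * (c * w - b) = 0"
    by algebra
  have "c - b * w \<noteq> 0"
    using quartic nz by auto
  have "cnj z = ((1 / w)^2 - 1) / (c * (1 / w) - b)"
    using assms(2,3) w(2) z(1) by simp
  also have "\<dots> = (1 - w^2) / (w * (c - b * w))"
    using w(1) \<open>c - b * w \<noteq> 0\<close> by (simp add: divide_simps power2_eq_square)
  also have "\<dots> = 1 / z"
    using w(1) \<open>c - b * w \<noteq> 0\<close> nz quartic z(1) by (auto simp add: frac_eq_eq) algebra
  finally show "cnj z = 1 / z" .
qed

lemma sum_atMost_3: "(\<Sum>i\<le>(3::nat). f i) = f 0 + f 1 + f 2 + (f 3 :: 'b::comm_monoid_add)"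
proof -
  have "{..3::nat} = {0, 1, 2, 3}"
    by auto
  then show ?thesis
    by (simp add: add_ac)
qed

lemma all_le_3_iff: "(\<forall>i\<le>3. P i) \<longleftrightarrow> P 0 \<and> P 1 \<and> P 2 \<and> P (3::nat)"
  by (auto simp: le_Suc_eq numeral_3_eq_3 numeral_2_eq_2)

lemma combination_atMost_3:
  "A 0 + scale_cmat w1 (A 1) + scale_cmat w2 (A 2) + scale_cmat w3 (A 3)
    = (\<Sum>j\<le>3. scale_cmat ([1, w1, w2, w3] ! j) (A j))"
  by (simp add: sum_atMost_3)

text \<open>The arguments a_jk stand for the paper's a_{j,k} = w_j/w_k + w_k/w_j, with w_0 = 1.\<close>

definition row_norm ::
  "(nat \<Rightarrow> complex) \<Rightarrow> complex \<Rightarrow> complex \<Rightarrow> complex \<Rightarrow> complex \<Rightarrow> complex \<Rightarrow> complex \<Rightarrow> complex"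
where
  "row_norm p a01 a02 a03 a12 a13 a23 = (p 0)^2 + (p 1)^2 + (p 2)^2 + (p 3)^2
     + p 0 * p 1 * a01 + p 0 * p 2 * a02 + p 0 * p 3 * a03
     + p 1 * p 2 * a12 + p 1 * p 3 * a13 + p 2 * p 3 * a23"

lemma eigenvalue_norm_eq_row_norm:
  assumes "cmod w1 = 1" "cmod w2 = 1" "cmod w3 = 1"
  shows "(\<Sum>j\<le>3. p j * [1, w1, w2, w3] ! j) * (\<Sum>j\<le>3. p j * cnj ([1, w1, w2, w3] ! j))
    = row_norm p (w1 + 1 / w1) (w2 + 1 / w2) (w3 + 1 / w3)
        (w1 / w2 + w2 / w1) (w1 / w3 + w3 / w1) (w2 / w3 + w3 / w2)"
proof -
  have "w1 \<noteq> 0" "w2 \<noteq> 0" "w3 \<noteq> 0"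
    using assms by auto
  moreover have "cnj w1 = 1 / w1" "cnj w2 = 1 / w2" "cnj w3 = 1 / w3"
    using assms divide_conv_cnj[of _ 1] by simp_all
  ultimately show ?thesis
    by (simp add: sum_atMost_3 row_norm_def field_simps power2_eq_square) algebra
qed

lemma P_q_entries:
  "P_q q 0 0 = 1" "P_q q 1 0 = 1" "P_q q 2 0 = 1" "P_q q 3 0 = 1"
  "P_q q 0 1 = (of_nat q)^2 / 2 - of_nat q" "P_q q 0 2 = (of_nat q)^2 / 2" "P_q q 0 3 = of_nat q - 2"
  "P_q q 1 1 = of_nat q / 2" "P_q q 1 2 = - of_nat q / 2" "P_q q 1 3 = -1"
  "P_q q 2 1 = - of_nat q / 2 + 1" "P_q q 2 2 = - of_nat q / 2" "P_q q 2 3 = of_nat q - 2"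
  "P_q q 3 1 = - of_nat q / 2" "P_q q 3 2 = of_nat q / 2" "P_q q 3 3 = -1"
  unfolding P_q_def Let_def by (simp_all add: numeral_eq_Suc)

lemma hadamard_if_row_norms:
  fixes A :: "nat \<Rightarrow> complex^'a::finite^'a"
  assumes "CARD('a) = q^2 - 1" "sym_assoc_scheme 3 A" "first_eigenmatrix 3 A (P_q q)"
    and "cmod w1 = 1" "cmod w2 = 1" "cmod w3 = 1"
    and "\<forall>i\<le>3. row_norm (P_q q i) (w1 + 1 / w1) (w2 + 1 / w2) (w3 + 1 / w3)
      (w1 / w2 + w2 / w1) (w1 / w3 + w3 / w1) (w2 / w3 + w3 / w2) = (of_nat q)^2 - 1"
  shows "complex_hadamard (A 0 + scale_cmat w1 (A 1) + scale_cmat w2 (A 2) + scale_cmat w3 (A 3))"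
  unfolding combination_atMost_3
proof (rule hadamard_if_norm_eigenvalues[OF assms(2,3)])
  show "cmod ([1, w1, w2, w3] ! j) = 1" if "j \<le> 3" for j
    using that assms(4-6) all_le_3_iff[of "\<lambda>j. cmod ([1, w1, w2, w3] ! j) = 1"] by auto
  have "of_nat CARD('a) = (of_nat q)^2 - (1::complex)"
    using assms(1) by (cases q) (auto simp: of_nat_diff)
  then show "(\<Sum>j\<le>3. P_q q i j * [1, w1, w2, w3] ! j) * (\<Sum>j\<le>3. P_q q i j * cnj ([1, w1, w2, w3] ! j))
      = of_nat CARD('a)" if "i \<le> 3" for i
    using that assms(7) eigenvalue_norm_eq_row_norm[OF assms(4-6)] by simp
qed

lemma hadamard_if_cond_iii:
  fixes A :: "nat \<Rightarrow> complex^'a::finite^'a"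
  assumes "q \<ge> 4" "CARD('a) = q^2 - 1" "sym_assoc_scheme 3 A" "first_eigenmatrix 3 A (P_q q)"
    and "w1 \<noteq> 0" "cond_iii q w1 w2 w3"
  shows "complex_hadamard (A 0 + scale_cmat w1 (A 1) + scale_cmat w2 (A 2) + scale_cmat w3 (A 3))"
proof -
  define Q :: complex where "Q = of_nat q"
  define u where "u = 2 * (Q^2 - 6) / (Q^2 - 4)"
  have q2: "(real q)^2 \<ge> 16"
    using power_mono[of 4 "real q" 2] assms(1) by simp
  have "q^2 \<noteq> 4"
    using power_mono[of 4 q 2] assms(1) by auto
  then have "Q^2 \<noteq> 4"
    unfolding Q_def by (metis of_nat_numeral of_nat_power of_nat_eq_iff)
  have w: "w1 + 1 / w1 = u" "w2 = -1" "w3 = w1"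
    using assms(6) unfolding cond_iii_def Let_def u_def Q_def by auto
  have "w1 + 1 / w1 = of_real (2 * ((real q)^2 - 6) / ((real q)^2 - 4))"
    using w(1) by (simp add: u_def Q_def)
  then have "cmod w1 = 1"
    by (rule norm_1_if_add_inverse_real[OF assms(5)])
      (use q2 in \<open>simp add: abs_less_iff divide_less_eq less_divide_eq\<close>)
  moreover have "\<forall>i\<le>3. row_norm (P_q q i) u (-2) u (-u) 2 (-u) = Q^2 - 1"
    unfolding all_le_3_iff row_norm_def P_q_entries Q_def[symmetric]
    by (simp add: u_def divide_simps \<open>Q^2 \<noteq> 4\<close>) (intro conjI; algebra)
  moreover have "w2 + 1 / w2 = -2" "w3 + 1 / w3 = u" "w1 / w2 + w2 / w1 = -u"
    "w1 / w3 + w3 / w1 = 2" "w2 / w3 + w3 / w2 = -u"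
    using w assms(5) by (simp_all flip: w(1))
  ultimately show ?thesis
    unfolding Q_def using w by (intro hadamard_if_row_norms[OF assms(2-4)]) simp_all
qed

lemma hadamard_if_cond_iv:
  fixes A :: "nat \<Rightarrow> complex^'a::finite^'a"
  assumes "q \<ge> 4" "CARD('a) = q^2 - 1" "sym_assoc_scheme 3 A" "first_eigenmatrix 3 A (P_q q)"
    and "w2 \<noteq> 0" "cond_iv q w1 w2 w3"
  shows "complex_hadamard (A 0 + scale_cmat w1 (A 1) + scale_cmat w2 (A 2) + scale_cmat w3 (A 3))"
proof -
  define Q :: complex where "Q = of_nat q"
  define u where "u = - 2 * (Q^2 - 2) / Q^2"
  have "Q \<noteq> 0"
    using assms(1) by (simp add: Q_def)
  have w: "w1 = 1" "w3 = 1" "w2 + 1 / w2 = u"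
    using assms(6) unfolding cond_iv_def Let_def u_def Q_def by auto
  have "w2 + 1 / w2 = of_real (- 2 * ((real q)^2 - 2) / (real q)^2)"
    using w(3) by (simp add: u_def Q_def)
  then have "cmod w2 = 1"
    by (rule norm_1_if_add_inverse_real[OF assms(5)])
      (use assms(1) in \<open>simp add: abs_less_iff divide_less_eq less_divide_eq\<close>)
  moreover have "\<forall>i\<le>3. row_norm (P_q q i) 2 u 2 u 2 u = Q^2 - 1"
    unfolding all_le_3_iff row_norm_def P_q_entries Q_def[symmetric]
    by (simp add: u_def divide_simps \<open>Q \<noteq> 0\<close>) (intro conjI; algebra)
  moreover have "w1 / w2 + w2 / w1 = u" "w2 / w3 + w3 / w2 = u"
    using w by (simp_all add: add.commute)
  ultimately show ?thesis
    unfolding Q_def using w by (intro hadamard_if_row_norms[OF assms(2-4)]) simp_all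
qed

lemma hadamard_if_cond_v:
  fixes A :: "nat \<Rightarrow> complex^'a::finite^'a"
  assumes "q \<ge> 4" "CARD('a) = q^2 - 1" "sym_assoc_scheme 3 A" "first_eigenmatrix 3 A (P_q q)"
    and "w1 \<noteq> 0" "cond_v q w1 w2 w3"
  shows "complex_hadamard (A 0 + scale_cmat w1 (A 1) + scale_cmat w2 (A 2) + scale_cmat w3 (A 3))"
proof -
  define Q :: complex where "Q = of_nat q"
  define u where "u = - 2 / Q"
  have "Q \<noteq> 0"
    using assms(1) by (simp add: Q_def)
  have w: "w1 + 1 / w1 = u" "w2 = 1 / w1" "w3 = 1"
    using assms(6) unfolding cond_v_def Let_def u_def Q_def by auto
  have "w1 + 1 / w1 = of_real (- 2 / real q)"
    using w(1) by (simp add: u_def Q_def)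
  then have "cmod w1 = 1"
    by (rule norm_1_if_add_inverse_real[OF assms(5)])
      (use assms(1) in \<open>simp add: abs_less_iff divide_less_eq less_divide_eq\<close>)
  moreover have "\<forall>i\<le>3. row_norm (P_q q i) u u 2 (u^2 - 2) u u = Q^2 - 1"
    unfolding all_le_3_iff row_norm_def P_q_entries Q_def[symmetric]
    by (simp add: u_def divide_simps \<open>Q \<noteq> 0\<close>) (intro conjI; algebra)
  moreover have "w2 + 1 / w2 = u" "w1 / w2 + w2 / w1 = u^2 - 2" "w2 / w3 + w3 / w2 = u"
    unfolding w(2,3) using assms(5) by (simp_all add: field_simps power2_eq_square flip: w(1))
  ultimately show ?thesis
    unfolding Q_def using w by (intro hadamard_if_row_norms[OF assms(2-4)]) (simp_all add: norm_divide)
qed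

definition vi_a01 :: "'a::field \<Rightarrow> 'a \<Rightarrow> 'a" where
  "vi_a01 Q R = (-(Q - 1)*(Q - 2) + (Q + 2)*R) / (2*Q*(Q + 1))"

definition vi_a02 :: "'a::field \<Rightarrow> 'a \<Rightarrow> 'a" where
  "vi_a02 Q R = ((Q + 2)*(Q - 1) - (Q - 2)*R) / (2*Q*(Q - 3))"

definition vi_a03 :: "'a::field \<Rightarrow> 'a \<Rightarrow> 'a" where
  "vi_a03 Q R = (5*Q^2 - 2*Q - 19 - (Q - 1)*R) / (2*(Q + 1)*(Q - 3))"

definition vi_a12 :: "'a::field \<Rightarrow> 'a \<Rightarrow> 'a" where
  "vi_a12 Q R = 2*(-(Q^4) + 2*Q^3 + 4*Q^2 - 10*Q + 1 + (Q - 1)*R) / (Q^2*(Q + 1)*(Q - 3))"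

text \<open>The value of w_2/w_3 + w_3/w_2 under condition (vi), which the condition does not list.\<close>

definition vi_a23 :: "'a::field \<Rightarrow> 'a \<Rightarrow> 'a" where
  "vi_a23 Q R = (Q^2 - Q*R - 3*Q - 2*R + 2) / (2*Q*(Q + 1))"

lemma vi_coefficient_identities:
  fixes Q R :: "'a::field_char_0"
  assumes "R^2 = (17*Q - 1)*(Q - 1)" "Q \<noteq> 0" "Q + 1 \<noteq> 0" "Q - 3 \<noteq> 0"
  shows "(vi_a01 Q R)^2 - vi_a01 Q R * vi_a02 Q R * vi_a12 Q R + (vi_a02 Q R)^2 + (vi_a12 Q R)^2 = 4"
    and "(vi_a01 Q R)^2 - vi_a01 Q R * vi_a03 Q R * (- vi_a02 Q R) + (vi_a03 Q R)^2 + (- vi_a02 Q R)^2 = 4"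
    and "x^2 - vi_a01 Q R * x + 1 = 0 \<Longrightarrow>
      (- vi_a02 Q R * x - vi_a03 Q R)^2 + (vi_a12 Q R * x - vi_a02 Q R)^2
        = vi_a23 Q R * (- vi_a02 Q R * x - vi_a03 Q R) * (vi_a12 Q R * x - vi_a02 Q R)"
proof -
  show "(vi_a01 Q R)^2 - vi_a01 Q R * vi_a02 Q R * vi_a12 Q R + (vi_a02 Q R)^2 + (vi_a12 Q R)^2 = 4"
    unfolding vi_a01_def vi_a02_def vi_a12_def using assms(2-4)
    by (simp add: divide_simps) (use assms(1) in algebra)
  show "(vi_a01 Q R)^2 - vi_a01 Q R * vi_a03 Q R * (- vi_a02 Q R) + (vi_a03 Q R)^2 + (- vi_a02 Q R)^2 = 4"
    unfolding vi_a01_def vi_a02_def vi_a03_def using assms(2-4)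
    by (simp add: divide_simps) (use assms(1) in algebra)
  assume "x^2 - vi_a01 Q R * x + 1 = 0"
  then show "(- vi_a02 Q R * x - vi_a03 Q R)^2 + (vi_a12 Q R * x - vi_a02 Q R)^2
        = vi_a23 Q R * (- vi_a02 Q R * x - vi_a03 Q R) * (vi_a12 Q R * x - vi_a02 Q R)"
    unfolding vi_a01_def vi_a02_def vi_a03_def vi_a12_def vi_a23_def using assms(2-4)
    by (simp add: divide_simps) (use assms(1) in algebra)
qed

lemma of_real_vi_coefficients:
  "of_real (vi_a01 x y) = (vi_a01 (of_real x) (of_real y) :: complex)"
  "of_real (vi_a02 x y) = (vi_a02 (of_real x) (of_real y) :: complex)"
  "of_real (vi_a03 x y) = (vi_a03 (of_real x) (of_real y) :: complex)"
  "of_real (vi_a12 x y) = (vi_a12 (of_real x) (of_real y) :: complex)"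
  by (simp_all add: vi_a01_def vi_a02_def vi_a03_def vi_a12_def)

lemma cond_vi_iff:
  "cond_vi q r w1 w2 w3 \<longleftrightarrow>
    w1 + 1 / w1 = vi_a01 (of_nat q) (of_real r) \<and>
    w2 = (w1^2 - 1) / (vi_a12 (of_nat q) (of_real r) * w1 - vi_a02 (of_nat q) (of_real r)) \<and>
    w3 = (w1^2 - 1) / (- vi_a02 (of_nat q) (of_real r) * w1 - vi_a03 (of_nat q) (of_real r))"
  by (simp add: cond_vi_def Let_def vi_a01_def vi_a02_def vi_a03_def vi_a12_def)

lemma vi_denominators_nonzero:
  assumes "q \<noteq> 0" "q \<noteq> 3"
  shows "(of_nat q :: 'a::field_char_0) \<noteq> 0" "of_nat q + (1::'a) \<noteq> 0" "of_nat q - (3::'a) \<noteq> 0"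
proof -
  show "(of_nat q :: 'a) \<noteq> 0"
    using assms(1) by simp
  show "of_nat q + (1::'a) \<noteq> 0"
    by (metis of_nat_Suc add.commute of_nat_eq_0_iff Zero_not_Suc)
  show "of_nat q - (3::'a) \<noteq> 0"
    using assms(2) by (metis eq_iff_diff_eq_0 of_nat_numeral of_nat_eq_iff)
qed

lemma vi_row_norms:
  fixes R :: complex
  assumes "R^2 = (17 * of_nat q - 1) * (of_nat q - 1)" "q \<noteq> 0" "q \<noteq> 3"
  shows "\<forall>i\<le>3. row_norm (P_q q i) (vi_a01 (of_nat q) R) (vi_a02 (of_nat q) R) (vi_a03 (of_nat q) R)
      (vi_a12 (of_nat q) R) (- vi_a02 (of_nat q) R) (vi_a23 (of_nat q) R) = (of_nat q)^2 - 1"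
  unfolding all_le_3_iff row_norm_def P_q_entries vi_a01_def vi_a02_def vi_a03_def vi_a12_def vi_a23_def
  using vi_denominators_nonzero[OF assms(2,3), where 'a=complex]
  by (simp add: divide_simps) (intro conjI; use assms(1) in algebra)

lemma abs_vi_a01_less_2:
  fixes q r :: real
  assumes "q \<ge> 4" "r > 0" "r^2 = (17*q - 1)*(q - 1)"
  shows "\<bar>vi_a01 q r\<bar> < 2"
proof -
  define t where "t = q - 4"
  have "0 \<le> 8*t^4 + 88*t^3 + 312*t^2 + 392*t"
    using assms(1) by (simp add: t_def)
  have "((q + 2) * r)^2 = (q + 2)^2 * ((17*q - 1)*(q - 1))"
    by (simp add: power_mult_distrib assms(3))
  also have "\<dots> = (5*q^2 + q + 2)^2 - (8*t^4 + 88*t^3 + 312*t^2 + 392*t + 160)"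
    unfolding t_def by algebra
  also have "\<dots> < (5*q^2 + q + 2)^2"
    using \<open>0 \<le> 8*t^4 + 88*t^3 + 312*t^2 + 392*t\<close> by linarith
  finally have "(q + 2) * r < 5*q^2 + q + 2"
    by (rule power_less_imp_less_base) (use assms(1) in simp)
  moreover have "0 < (q + 2) * r"
    using assms(1,2) by simp
  ultimately have "- 2 * (2*q*(q + 1)) < -(q - 1)*(q - 2) + (q + 2)*r"
    and "-(q - 1)*(q - 2) + (q + 2)*r < 2 * (2*q*(q + 1))"
    using assms(1) by (simp_all add: algebra_simps power2_eq_square)
  moreover have "0 < 2*q*(q + 1)"
    using assms(1) by simp
  ultimately have "- 2 < vi_a01 q r" "vi_a01 q r < 2"
    unfolding vi_a01_def by (simp_all add: pos_divide_less_eq pos_less_divide_eq)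
  then show ?thesis
    by linarith
qed

lemma abs_vi_a01_greater_2:
  fixes q r :: real
  assumes "q \<ge> 4" "r < 0" "r^2 = (17*q - 1)*(q - 1)"
  shows "\<bar>vi_a01 q r\<bar> > 2"
proof -
  define t where "t = q - 4"
  have "0 \<le> 8*t^4 + 136*t^3 + 824*t^2 + 2072*t"
    using assms(1) by (simp add: t_def)
  have "(3*q^2 + 7*q - 2)^2 < (3*q^2 + 7*q - 2)^2 + (8*t^4 + 136*t^3 + 824*t^2 + 2072*t + 1760)"
    using \<open>0 \<le> 8*t^4 + 136*t^3 + 824*t^2 + 2072*t\<close> by linarith
  also have "\<dots> = (q + 2)^2 * ((17*q - 1)*(q - 1))"
    unfolding t_def by algebra
  also have "\<dots> = ((q + 2) * (- r))^2"
    by (simp add: power_mult_distrib assms(3))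
  finally have "3*q^2 + 7*q - 2 < (q + 2) * (- r)"
    by (rule power_less_imp_less_base) (use assms(1,2) in \<open>simp add: mult_nonneg_nonpos\<close>)
  then have "-(q - 1)*(q - 2) + (q + 2)*r < - 2 * (2*q*(q + 1))"
    by (simp add: algebra_simps power2_eq_square)
  moreover have "0 < 2*q*(q + 1)"
    using assms(1) by simp
  ultimately have "vi_a01 q r < - 2"
    unfolding vi_a01_def by (simp add: pos_divide_less_eq)
  then show ?thesis
    by simp
qed

lemma cond_vi_pair_sums:
  fixes Q R w1 w2 w3 :: "'a::field_char_0"
  assumes "R^2 = (17*Q - 1)*(Q - 1)" "Q \<noteq> 0" "Q + 1 \<noteq> 0" "Q - 3 \<noteq> 0"
    and "w1 \<noteq> 0" "w2 \<noteq> 0" "w3 \<noteq> 0" and w: "w1 + 1 / w1 = vi_a01 Q R"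
    "w2 = (w1^2 - 1) / (vi_a12 Q R * w1 - vi_a02 Q R)"
    "w3 = (w1^2 - 1) / (- vi_a02 Q R * w1 - vi_a03 Q R)"
  shows "w2 + 1 / w2 = vi_a02 Q R" "w1 / w2 + w2 / w1 = vi_a12 Q R"
    and "w3 + 1 / w3 = vi_a03 Q R" "w1 / w3 + w3 / w1 = - vi_a02 Q R"
    and "w2 / w3 + w3 / w2 = vi_a23 Q R"
proof -
  note ids = vi_coefficient_identities[OF assms(1-4)]
  show "w2 + 1 / w2 = vi_a02 Q R" "w1 / w2 + w2 / w1 = vi_a12 Q R"
    using quotient_pair_sums[OF assms(5) w(1) ids(1) w(2) assms(6)] by blast+
  show "w3 + 1 / w3 = vi_a03 Q R" "w1 / w3 + w3 / w1 = - vi_a02 Q R"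
    using quotient_pair_sums[OF assms(5) w(1) ids(2) w(3) assms(7)] by blast+
  have "vi_a12 Q R * w1 - vi_a02 Q R \<noteq> 0" "- vi_a02 Q R * w1 - vi_a03 Q R \<noteq> 0"
    using w(2,3) assms(6,7) by auto
  then have "(- vi_a02 Q R * w1 - vi_a03 Q R) / (vi_a12 Q R * w1 - vi_a02 Q R)
      + (vi_a12 Q R * w1 - vi_a02 Q R) / (- vi_a02 Q R * w1 - vi_a03 Q R) = vi_a23 Q R"
    using ids(3)[OF quadratic_if_add_inverse[OF assms(5) w(1)]] by (simp add: ratio_add_inverse_eq_iff)
  then show "w2 / w3 + w3 / w2 = vi_a23 Q R"
    using w(2,3) assms(6,7) by simp
qed

lemma hadamard_if_cond_vi:
  fixes A :: "nat \<Rightarrow> complex^'a::finite^'a"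
  assumes "q \<ge> 4" "CARD('a) = q^2 - 1" "sym_assoc_scheme 3 A" "first_eigenmatrix 3 A (P_q q)"
    and "w1 \<noteq> 0" "w2 \<noteq> 0" "w3 \<noteq> 0"
    and "r > 0" "r^2 = (17 * real q - 1) * (real q - 1)" "cond_vi q r w1 w2 w3"
  shows "complex_hadamard (A 0 + scale_cmat w1 (A 1) + scale_cmat w2 (A 2) + scale_cmat w3 (A 3))"
proof -
  define Q :: complex where "Q = of_nat q"
  define R :: complex where "R = of_real r"
  have w: "w1 + 1 / w1 = vi_a01 Q R" "w2 = (w1^2 - 1) / (vi_a12 Q R * w1 - vi_a02 Q R)"
    "w3 = (w1^2 - 1) / (- vi_a02 Q R * w1 - vi_a03 Q R)"
    using assms(10) unfolding cond_vi_iff Q_def R_def by auto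
  have real: "vi_a01 Q R = of_real (vi_a01 (real q) r)" "vi_a02 Q R = of_real (vi_a02 (real q) r)"
    "vi_a03 Q R = of_real (vi_a03 (real q) r)" "vi_a12 Q R = of_real (vi_a12 (real q) r)"
    unfolding of_real_vi_coefficients Q_def R_def by simp_all
  have R2: "R^2 = (17 * Q - 1) * (Q - 1)"
    using arg_cong[OF assms(9), of complex_of_real] by (simp add: Q_def R_def)
  have "Q \<noteq> 0" "Q + 1 \<noteq> 0" "Q - 3 \<noteq> 0"
    using vi_denominators_nonzero[of q] assms(1) unfolding Q_def by simp_all
  note pairs = cond_vi_pair_sums[OF R2 this assms(5-7) w]
  have "cmod w1 = 1"
    using norm_1_if_add_inverse_real[OF assms(5)] w(1) real(1)
      abs_vi_a01_less_2[OF _ assms(8,9)] assms(1) by simp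
  moreover have "cmod w2 = 1" "cmod w3 = 1"
    using norm_quotient_eq_1[OF \<open>cmod w1 = 1\<close> _ _ w(2) assms(6) pairs(1)]
      norm_quotient_eq_1[OF \<open>cmod w1 = 1\<close> _ _ w(3) assms(7) pairs(3)] by (simp_all add: real)
  moreover have "\<forall>i\<le>3. row_norm (P_q q i) (vi_a01 Q R) (vi_a02 Q R) (vi_a03 Q R) (vi_a12 Q R)
      (- vi_a02 Q R) (vi_a23 Q R) = Q^2 - 1"
    using vi_row_norms[of R q] R2 assms(1) by (simp add: Q_def)
  ultimately show ?thesis
    using w(1) pairs unfolding Q_def by (intro hadamard_if_row_norms[OF assms(2-4)]) simp_all
qed

lemma not_norm_1_if_cond_i_or_ii:
  assumes "q \<ge> 4" "cond_i q w1 w2 w3 \<or> cond_ii q w1 w2 w3"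
  shows "cmod w3 \<noteq> 1"
proof
  assume "cmod w3 = 1"
  moreover have "w3 + 1 / w3 = of_real (3 - (real q)^2)"
    using assms(2) unfolding cond_i_def cond_ii_def Let_def by (auto simp: algebra_simps)
  ultimately have "\<bar>3 - (real q)^2\<bar> \<le> 2"
    by (rule abs_le_2_if_norm_1_add_inverse)
  moreover have "(real q)^2 \<ge> 16"
    using power_mono[of 4 "real q" 2] assms(1) by simp
  ultimately show False
    by simp
qed

lemma pos_if_cond_vi_norm_1:
  assumes "q \<ge> 4" "r^2 = (17 * real q - 1) * (real q - 1)" "cond_vi q r w1 w2 w3" "cmod w1 = 1"
  shows "r > 0"
proof (rule ccontr)
  assume "\<not> r > 0"
  moreover have "r \<noteq> 0"
    using assms(1,2) by auto
  ultimately have "2 < \<bar>vi_a01 (real q) r\<bar>"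
    using abs_vi_a01_greater_2 assms(1,2) by simp
  moreover have "w1 + 1 / w1 = of_real (vi_a01 (real q) r)"
    using assms(3) unfolding cond_vi_iff by (simp add: of_real_vi_coefficients)
  then have "\<bar>vi_a01 (real q) r\<bar> \<le> 2"
    by (rule abs_le_2_if_norm_1_add_inverse[OF assms(4)])
  ultimately show False
    by simp
qed

theorem corollary4p2:
  fixes q :: nat
    and A :: "nat \<Rightarrow> complex^'a::finite^'a"
    and w1 w2 w3 :: complex
  assumes "q \<ge> 4"
    and "CARD('a) = q^2 - 1"
    and "sym_assoc_scheme 3 A"
    and "first_eigenmatrix 3 A (P_q q)"
    and "w1 \<noteq> 0" "w2 \<noteq> 0" "w3 \<noteq> 0"
    and "cond_i q w1 w2 w3 \<or> cond_ii q w1 w2 w3 \<or> cond_iii q w1 w2 w3 \<or>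
         cond_iv q w1 w2 w3 \<or> cond_v q w1 w2 w3 \<or>
         (\<exists>r::real. r^2 = (17 * real q - 1) * (real q - 1) \<and> cond_vi q r w1 w2 w3)"
  shows "complex_hadamard (A 0 + scale_cmat w1 (A 1) + scale_cmat w2 (A 2) + scale_cmat w3 (A 3))
     \<longleftrightarrow> (cond_iii q w1 w2 w3 \<or> cond_iv q w1 w2 w3 \<or> cond_v q w1 w2 w3 \<or>
          (\<exists>r::real. r > 0 \<and> r^2 = (17 * real q - 1) * (real q - 1) \<and> cond_vi q r w1 w2 w3))"
proof -
  let ?W = "A 0 + scale_cmat w1 (A 1) + scale_cmat w2 (A 2) + scale_cmat w3 (A 3)"
  show ?thesis
  proof
    assume "complex_hadamard ?W"
    then have norm: "cmod ([1, w1, w2, w3] ! j) = 1" if "j \<le> 3" for j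
      unfolding combination_atMost_3 by (rule hadamard_imp_norm_weight[OF assms(3) _ that])
    have "cmod w1 = 1" "cmod w3 = 1"
      using norm[of 1] norm[of 3] by simp_all
    then show "cond_iii q w1 w2 w3 \<or> cond_iv q w1 w2 w3 \<or> cond_v q w1 w2 w3 \<or>
        (\<exists>r::real. r > 0 \<and> r^2 = (17 * real q - 1) * (real q - 1) \<and> cond_vi q r w1 w2 w3)"
      using assms(1,8) not_norm_1_if_cond_i_or_ii pos_if_cond_vi_norm_1 by blast
  next
    assume "cond_iii q w1 w2 w3 \<or> cond_iv q w1 w2 w3 \<or> cond_v q w1 w2 w3 \<or>
        (\<exists>r::real. r > 0 \<and> r^2 = (17 * real q - 1) * (real q - 1) \<and> cond_vi q r w1 w2 w3)"
    then show "complex_hadamard ?W"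
      using hadamard_if_cond_iii[OF assms(1-4,5)] hadamard_if_cond_iv[OF assms(1-4,6)]
        hadamard_if_cond_v[OF assms(1-4,5)] hadamard_if_cond_vi[OF assms(1-7)] by blast
  qed
qed

end
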